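(* Let $n\geq 3$, $p \geq 2$ and $m\geq 1$ be integers, and let $c$ be an $a$-packing coloring of $FSSD_m(K_n \star P_p)$ with $a \leq n+3$. Then $c(u_i)\neq 1$ for all $i\in\{1,\dots,n\}$, and $c(v_{i,g})\neq 1$ for all $i\in\{1,\dots,n\}$ and $g\in\{1,\dots,p\}$.
   Context: All graphs are finite and simple. An $a$-packing coloring of a graph $H$ is a map $c:V(H)\to\{1,\dots,a\}$ such that $c(x)=c(y)=i$ with $x\neq y$ implies $d_H(x,y)>i$. For a positive integer $m$, $FSSD_m(G)$ is obtained from a graph $G$ by replacing each edge $xy$ by a copy of $K_{2,m}$: the edge $xy$ is deleted and $m$ new vertices are added, each adjacent to exactly $x$ and $y$. The neighborhood corona $G\star H$ of graphs $G$ (with vertices $w_1,\dots,w_{n}$) and $H$ consists of one copy of $G$ and $n$ copies $H_1,\dots,H_n$ of $H$ (each retaining the edges of $H$), where every vertex of $H_i$ is additionally joined to every neighbor of $w_i$ in $G$. $K_n$ is the complete graph and $P_p$ the path on $p$ vertices. In $K_n\star P_p$ the vertices of $K_n$ are $u_1,\dots,u_n$ and the vertices of the copy of $P_p$ corresponding to $u_i$ are $v_{i,1},\dots,v_{i,p}$; these same names denote the corresponding (non-subdivided) vertices of $FSSD_m(K_n\star P_p)$. *)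

theory Defs
  imports "HOL-Library.Extended_Nat"
begin

text \<open>A (finite, simple) graph is given by a vertex set and a symmetric irreflexive
adjacency relation (restricted to the vertex set).\<close>
type_synonym 'a graph = "'a set \<times> ('a \<Rightarrow> 'a \<Rightarrow> bool)"

definition verts :: "'a graph \<Rightarrow> 'a set" where "verts G = fst G"
definition adj :: "'a graph \<Rightarrow> 'a \<Rightarrow> 'a \<Rightarrow> bool" where "adj G = snd G"

definition gdist :: "'a graph \<Rightarrow> 'a \<Rightarrow> 'a \<Rightarrow> enat" where
  "gdist G x y = (if \<exists>k. (adj G ^^ k) x y then enat (LEAST k. (adj G ^^ k) x y) else \<infinity>)"

definition packing_coloring :: "'a graph \<Rightarrow> nat \<Rightarrow> ('a \<Rightarrow> nat) \<Rightarrow> bool" where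
  "packing_coloring H a c \<longleftrightarrow>
     (\<forall>x\<in>verts H. c x \<in> {1..a}) \<and>
     (\<forall>x\<in>verts H. \<forall>y\<in>verts H. x \<noteq> y \<and> c x = c y \<longrightarrow> gdist H x y > enat (c x))"

definition complete_graph :: "nat \<Rightarrow> nat graph" where
  "complete_graph n = ({1..n}, \<lambda>i j. i \<in> {1..n} \<and> j \<in> {1..n} \<and> i \<noteq> j)"

definition path_graph :: "nat \<Rightarrow> nat graph" where
  "path_graph p = ({1..p}, \<lambda>i j. i \<in> {1..p} \<and> j \<in> {1..p} \<and> (j = i + 1 \<or> i = j + 1))"

text \<open>Neighborhood corona: vertices Inl w (copy of G) and Inr (w,h) (vertex h of copy H_w).\<close>
definition nbh_corona :: "'a graph \<Rightarrow> 'b graph \<Rightarrow> ('a + ('a \<times> 'b)) graph" where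
  "nbh_corona G H =
    (let V = Inl ` verts G \<union> {Inr (w, h) | w h. w \<in> verts G \<and> h \<in> verts H} in
     (V, \<lambda>x y. x \<in> V \<and> y \<in> V \<and>
        (case (x, y) of
           (Inl u, Inl v) \<Rightarrow> adj G u v
         | (Inr (w, h), Inr (w', h')) \<Rightarrow> w = w' \<and> adj H h h'
         | (Inr (w, h), Inl v) \<Rightarrow> adj G w v
         | (Inl v, Inr (w, h)) \<Rightarrow> adj G w v)))"

datatype 'a fssd_vertex = Orig 'a | Sub "'a set" nat

definition edges :: "'a graph \<Rightarrow> 'a set set" where
  "edges G = {{x, y} | x y. x \<in> verts G \<and> y \<in> verts G \<and> adj G x y}"

text \<open>FSSD_m(G): every edge e = xy is replaced by m new vertices Sub e 1, ..., Sub e m,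
 each adjacent exactly to x and y; the edge xy itself is deleted.\<close>
definition FSSD :: "nat \<Rightarrow> 'a graph \<Rightarrow> 'a fssd_vertex graph" where
  "FSSD m G =
    (Orig ` verts G \<union> {Sub e k | e k. e \<in> edges G \<and> k \<in> {1..m}},
     \<lambda>x y. (\<exists>v e k. x = Orig v \<and> y = Sub e k \<and> e \<in> edges G \<and> v \<in> e \<and> k \<in> {1..m})
         \<or> (\<exists>v e k. y = Orig v \<and> x = Sub e k \<and> e \<in> edges G \<and> v \<in> e \<and> k \<in> {1..m}))"

end

(*
  If u_i had colour 1, its 3(n - 1) neighbours in the subdivision (on the edges to u_j, v_{j,1}
  and v_{j,2}, j \<noteq> i) would be pairwise at distance 2, so they would need 3(n - 1) > n + 2
  distinct colours. For v_{i,g}, an injective homomorphism K_n \<star> P_2 \<rightarrow> K_n \<star> P_p sending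
  v_{1,1} to v_{i,g} pulls the colouring back to FSSD_1(K_n \<star> P_2), because distances cannot
  grow along it. There, for n \<ge> 5, the n neighbours of v_{1,1} and the vertices u_2, ..., u_n
  need 2n - 2 > n + 2 colours, as only colour 2 can be shared between the two groups; for
  n = 3, 4 a verified exhaustive search rules out every colouring.
*)
theory Submission
  imports Defs "HOL-Combinatorics.Transposition"
begin

section \<open>Walks and packing colourings\<close>

lemma relpowp_2_I: "R x y \<Longrightarrow> R y z \<Longrightarrow> (R ^^ 2) x z"
  by (metis One_nat_def numeral_2_eq_2 relpowp_1 relpowp_Suc_I2)

lemma relpowp_hom:
  assumes "\<And>x y. R x y \<Longrightarrow> S (f x) (f y)" and "(R ^^ k) x y"
  shows "(S ^^ k) (f x) (f y)"
  using assms(2)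
proof (induction k arbitrary: y)
  case (Suc k)
  then obtain z where "(R ^^ k) x z" "R z y" by (auto elim: relpowp_Suc_E)
  with Suc.IH assms(1) show ?case by (blast intro: relpowp_Suc_I)
qed simp

lemma gdist_le_walk: "(adj H ^^ k) x y \<Longrightarrow> gdist H x y \<le> enat k"
  unfolding gdist_def by (auto intro: Least_le)

lemma packing_coloring_range: "packing_coloring H a c \<Longrightarrow> x \<in> verts H \<Longrightarrow> c x \<in> {1..a}"
  unfolding packing_coloring_def by blast

lemma packing_coloring_walk:
  assumes "packing_coloring H a c" "x \<in> verts H" "y \<in> verts H" "x \<noteq> y" "c x = c y"
    and "(adj H ^^ k) x y"
  shows "c x < k"
proof -
  have "enat (c x) < gdist H x y" using assms(1-5) unfolding packing_coloring_def by blast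
  also have "\<dots> \<le> enat k" using assms(6) by (rule gdist_le_walk)
  finally show ?thesis by simp
qed

lemma packing_coloring_inj_on:
  assumes pc: "packing_coloring H a c" and S: "S \<subseteq> verts H" "\<forall>x\<in>S. c x \<noteq> 1"
    and close: "\<And>x y. x \<in> S \<Longrightarrow> y \<in> S \<Longrightarrow> x \<noteq> y \<Longrightarrow> (adj H ^^ 2) x y"
  shows "inj_on c S" and "c ` S \<subseteq> {2..a}"
proof -
  have range: "c x \<in> {2..a}" if "x \<in> S" for x
    using packing_coloring_range[OF pc] S that by fastforce
  show "inj_on c S"
  proof (rule inj_onI, rule ccontr)
    fix x y assume "x \<in> S" "y \<in> S" "c x = c y" "x \<noteq> y"
    with packing_coloring_walk[OF pc] S close have "c x < 2" by blast
    with range \<open>x \<in> S\<close> show False by fastforce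
  qed
  show "c ` S \<subseteq> {2..a}" using range by blast
qed

text \<open>The neighbours of a vertex of colour 1 are pairwise joined through it.\<close>
lemma packing_coloring_neighbours:
  assumes pc: "packing_coloring H a c" and x: "x \<in> verts H" "c x = 1"
    and N: "N \<subseteq> verts H" "x \<notin> N" "\<And>y. y \<in> N \<Longrightarrow> adj H x y \<and> adj H y x"
  shows "inj_on c N" and "c ` N \<subseteq> {2..a}"
proof -
  have "c y \<noteq> 1" if "y \<in> N" for y
  proof
    assume "c y = 1"
    have "(adj H ^^ 1) y x" using N(3)[OF that] by (simp only: relpowp_1)
    with packing_coloring_walk[OF pc] N x that \<open>c y = 1\<close> show False by fastforce
  qed
  moreover have "(adj H ^^ 2) y z" if "y \<in> N" "z \<in> N" for y z
    using N(3)[OF that(1)] N(3)[OF that(2)] by (blast intro: relpowp_2_I)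
  ultimately show "inj_on c N" "c ` N \<subseteq> {2..a}"
    using packing_coloring_inj_on[OF pc N(1)] by blast+
qed

lemma card_add_le_if_one_shared_colour:
  assumes "finite A" "finite B" "inj_on c A" "inj_on c B"
    and "finite K" "c ` A \<union> c ` B \<subseteq> K" "card (c ` A \<inter> c ` B) \<le> 1"
  shows "card A + card B \<le> card K + 1"
proof -
  have "card A + card B = card (c ` A \<union> c ` B) + card (c ` A \<inter> c ` B)"
    using card_Un_Int[of "c ` A" "c ` B"] assms(1-4) by (simp add: card_image)
  also have "\<dots> \<le> card K + 1" using card_mono[OF assms(5,6)] assms(7) by linarith
  finally show ?thesis .
qed

definition inj_graph_hom :: "'a graph \<Rightarrow> 'b graph \<Rightarrow> ('a \<Rightarrow> 'b) \<Rightarrow> bool" where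
  "inj_graph_hom G G' f \<longleftrightarrow>
     f ` verts G \<subseteq> verts G' \<and> inj_on f (verts G) \<and> (\<forall>x y. adj G x y \<longrightarrow> adj G' (f x) (f y))"

lemma gdist_inj_graph_hom_le:
  assumes "inj_graph_hom G G' f"
  shows "gdist G' (f x) (f y) \<le> gdist G x y"
proof (cases "\<exists>k. (adj G ^^ k) x y")
  case True
  let ?k = "LEAST k. (adj G ^^ k) x y"
  have "(adj G ^^ ?k) x y" using True by (rule LeastI_ex)
  then have "(adj G' ^^ ?k) (f x) (f y)"
    using assms unfolding inj_graph_hom_def by (blast intro: relpowp_hom)
  then show ?thesis using True unfolding gdist_def[of G] by (simp add: gdist_le_walk)
qed (simp add: gdist_def)

text \<open>Distances can only shrink along an injective homomorphism, so packing colourings pull back.\<close>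
lemma packing_coloring_inj_graph_hom:
  assumes f: "inj_graph_hom H H' f" and pc: "packing_coloring H' a c"
  shows "packing_coloring H a (c \<circ> f)"
  unfolding packing_coloring_def
proof (intro conjI ballI impI)
  have fv: "f x \<in> verts H'" if "x \<in> verts H" for x
    using f that unfolding inj_graph_hom_def by blast
  show "(c \<circ> f) x \<in> {1..a}" if "x \<in> verts H" for x
    using packing_coloring_range[OF pc fv[OF that]] by simp
  fix x y assume xy: "x \<in> verts H" "y \<in> verts H" "x \<noteq> y \<and> (c \<circ> f) x = (c \<circ> f) y"
  then have "f x \<noteq> f y" using f unfolding inj_graph_hom_def by (meson inj_onD)
  then have "enat (c (f x)) < gdist H' (f x) (f y)"
    using pc fv xy unfolding packing_coloring_def by simp
  also have "\<dots> \<le> gdist H x y" by (rule gdist_inj_graph_hom_le[OF f])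
  finally show "enat ((c \<circ> f) x) < gdist H x y" by simp
qed

section \<open>Subdivisions\<close>

lemma doubleton_in_edges: "x \<in> verts G \<Longrightarrow> y \<in> verts G \<Longrightarrow> adj G x y \<Longrightarrow> {x, y} \<in> edges G"
  by (auto simp: edges_def)

lemma edgesE:
  assumes "e \<in> edges G"
  obtains x y where "e = {x, y}" "x \<in> verts G" "y \<in> verts G" "adj G x y"
  using assms by (auto simp: edges_def)

lemma edges_subset_verts: "e \<in> edges G \<Longrightarrow> e \<subseteq> verts G"
  by (auto simp: edges_def)

lemma doubleton_in_edges_iff:
  "{x, y} \<in> edges G \<longleftrightarrow> x \<in> verts G \<and> y \<in> verts G \<and> (adj G x y \<or> adj G y x)"
  by (auto simp: edges_def doubleton_eq_iff)

lemma verts_FSSD: "verts (FSSD m G) = Orig ` verts G \<union> {Sub e k | e k. e \<in> edges G \<and> k \<in> {1..m}}"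
  by (simp add: FSSD_def verts_def)

lemma Orig_in_verts_FSSD [simp]: "Orig x \<in> verts (FSSD m G) \<longleftrightarrow> x \<in> verts G"
  by (auto simp: verts_FSSD)

lemma Sub_in_verts_FSSD [simp]: "Sub e k \<in> verts (FSSD m G) \<longleftrightarrow> e \<in> edges G \<and> k \<in> {1..m}"
  by (auto simp: verts_FSSD)

lemma adj_FSSD:
  "adj (FSSD m G) s t \<longleftrightarrow>
     (\<exists>v e k. {s, t} = {Orig v, Sub e k} \<and> e \<in> edges G \<and> v \<in> e \<and> k \<in> {1..m})"
  by (auto simp: FSSD_def adj_def doubleton_eq_iff)

lemma adj_FSSD_Orig_Sub [simp]: "adj (FSSD m G) (Orig x) (Sub e k) \<longleftrightarrow> e \<in> edges G \<and> x \<in> e \<and> k \<in> {1..m}"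
  and adj_FSSD_Sub_Orig [simp]: "adj (FSSD m G) (Sub e k) (Orig x) \<longleftrightarrow> e \<in> edges G \<and> x \<in> e \<and> k \<in> {1..m}"
  and adj_FSSD_Orig_Orig [simp]: "\<not> adj (FSSD m G) (Orig x) (Orig y)"
  and adj_FSSD_Sub_Sub [simp]: "\<not> adj (FSSD m G) (Sub e k) (Sub e' k')"
  by (auto simp: adj_FSSD doubleton_eq_iff)

lemma FSSD_Sub_neighbour:
  assumes "x \<in> verts G" "y \<in> verts G" "adj G x y" "m \<ge> 1"
  shows "Sub {x, y} 1 \<in> verts (FSSD m G)"
    and "adj (FSSD m G) (Orig x) (Sub {x, y} 1)" "adj (FSSD m G) (Sub {x, y} 1) (Orig x)"
    and "adj (FSSD m G) (Orig y) (Sub {x, y} 1)" "adj (FSSD m G) (Sub {x, y} 1) (Orig y)"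
  using assms doubleton_in_edges[OF assms(1-3)] by simp_all

lemma FSSD_walk_Orig_Orig:
  assumes "m \<ge> 1" "x \<in> verts G" "y \<in> verts G" "adj G x y"
  shows "(adj (FSSD m G) ^^ 2) (Orig x) (Orig y)"
  using assms doubleton_in_edges[OF assms(2-4)] by (auto intro!: relpowp_2_I[where y = "Sub {x, y} 1"])

lemma FSSD_walk_double:
  assumes m: "m \<ge> 1" and G: "\<And>x y. adj G x y \<Longrightarrow> x \<in> verts G \<and> y \<in> verts G"
    and "(adj G ^^ k) x y"
  shows "(adj (FSSD m G) ^^ (2 * k)) (Orig x) (Orig y)"
  using assms(3)
proof (induction k arbitrary: y)
  case (Suc k)
  then obtain z where "(adj G ^^ k) x z" "adj G z y" by (auto elim: relpowp_Suc_E)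
  have "(adj (FSSD m G) ^^ (2 * k + 2)) (Orig x) (Orig y)"
    using relpowp_trans[OF Suc.IH[OF \<open>(adj G ^^ k) x z\<close>] FSSD_walk_Orig_Orig[OF m]]
      G \<open>adj G z y\<close> by blast
  then show ?case by simp
qed simp

primrec map_fssd :: "('a \<Rightarrow> 'b) \<Rightarrow> 'a fssd_vertex \<Rightarrow> 'b fssd_vertex" where
  "map_fssd f (Orig x) = Orig (f x)"
| "map_fssd f (Sub e k) = Sub (f ` e) k"

lemma image_in_edges:
  assumes "inj_graph_hom G G' f" "e \<in> edges G"
  shows "f ` e \<in> edges G'"
  using assms(2)
proof (rule edgesE)
  fix x y assume "e = {x, y}" "x \<in> verts G" "y \<in> verts G" "adj G x y"
  with assms(1) show ?thesis unfolding inj_graph_hom_def by (auto intro: doubleton_in_edges)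
qed

lemma inj_graph_hom_FSSD:
  assumes f: "inj_graph_hom G G' f" and "m \<le> m'"
  shows "inj_graph_hom (FSSD m G) (FSSD m' G') (map_fssd f)"
  unfolding inj_graph_hom_def
proof (intro conjI allI impI)
  have fv: "f ` verts G \<subseteq> verts G'" and inj: "inj_on f (verts G)"
    using f by (auto simp: inj_graph_hom_def)
  show "map_fssd f ` verts (FSSD m G) \<subseteq> verts (FSSD m' G')"
    using fv \<open>m \<le> m'\<close> image_in_edges[OF f] by (auto simp: verts_FSSD)
  show "inj_on (map_fssd f) (verts (FSSD m G))"
  proof (rule inj_onI)
    fix s t assume "s \<in> verts (FSSD m G)" "t \<in> verts (FSSD m G)" and "map_fssd f s = map_fssd f t"
    moreover have "e = e'" if "e \<in> edges G" "e' \<in> edges G" "f ` e = f ` e'" for e e'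
      using that inj_on_image_eq_iff[OF inj edges_subset_verts edges_subset_verts] by blast
    ultimately show "s = t"
      using inj by (cases s; cases t) (auto simp: inj_on_eq_iff)
  qed
  fix s t assume "adj (FSSD m G) s t"
  with \<open>m \<le> m'\<close> image_in_edges[OF f] show "adj (FSSD m' G') (map_fssd f s) (map_fssd f t)"
    by (cases s; cases t) auto
qed

text \<open>A walk-length bound on FSSD from one on the original graph: every vertex is anchored at
  itself (at distance 0) or at both ends of its edge (at distance 1).\<close>
definition anchors :: "'a fssd_vertex \<Rightarrow> ('a \<times> nat) set" where
  "anchors s = (case s of Orig x \<Rightarrow> {(x, 0)} | Sub e k \<Rightarrow> e \<times> {1})"

definition fssd_dist_bound :: "('a \<Rightarrow> 'a \<Rightarrow> nat) \<Rightarrow> 'a fssd_vertex \<Rightarrow> 'a fssd_vertex \<Rightarrow> nat" where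
  "fssd_dist_bound \<delta> s t = Min ((\<lambda>((x, i), (y, j)). i + 2 * \<delta> x y + j) ` (anchors s \<times> anchors t))"

lemma anchors_walk:
  assumes s: "s \<in> verts (FSSD m G)" and xi: "(x, i) \<in> anchors s"
  shows "x \<in> verts G" "(adj (FSSD m G) ^^ i) s (Orig x)" "(adj (FSSD m G) ^^ i) (Orig x) s"
proof -
  have "x \<in> verts G \<and> (adj (FSSD m G) ^^ i) s (Orig x) \<and> (adj (FSSD m G) ^^ i) (Orig x) s"
  proof (cases s)
    case (Orig v)
    with s xi show ?thesis by (simp add: anchors_def)
  next
    case (Sub e k)
    with s xi have "x \<in> e" "i = 1" "e \<in> edges G" "k \<in> {1..m}" by (simp_all add: anchors_def)
    with Sub show ?thesis using edges_subset_verts[of e G] by (simp only: relpowp_1) auto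
  qed
  then show "x \<in> verts G" "(adj (FSSD m G) ^^ i) s (Orig x)" "(adj (FSSD m G) ^^ i) (Orig x) s"
    by simp_all
qed

lemma anchors_finite_nonempty:
  assumes "s \<in> verts (FSSD m G)"
  shows "finite (anchors s)" "anchors s \<noteq> {}"
proof (atomize (full), cases s)
  case (Sub e k)
  with assms obtain x y where "e = {x, y}" by (auto elim: edgesE)
  with Sub show "finite (anchors s) \<and> anchors s \<noteq> {}" by (simp add: anchors_def)
qed (simp add: anchors_def)

lemma FSSD_walk_dist_bound:
  assumes m: "m \<ge> 1" and G: "\<And>x y. adj G x y \<Longrightarrow> x \<in> verts G \<and> y \<in> verts G"
    and \<delta>: "\<And>x y. x \<in> verts G \<Longrightarrow> y \<in> verts G \<Longrightarrow> (adj G ^^ \<delta> x y) x y"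
    and s: "s \<in> verts (FSSD m G)" and t: "t \<in> verts (FSSD m G)"
  shows "(adj (FSSD m G) ^^ fssd_dist_bound \<delta> s t) s t"
proof -
  let ?len = "\<lambda>((x, i), (y, j)). i + 2 * \<delta> x y + j"
  have "fssd_dist_bound \<delta> s t \<in> ?len ` (anchors s \<times> anchors t)"
    unfolding fssd_dist_bound_def
    using anchors_finite_nonempty[OF s] anchors_finite_nonempty[OF t] by (intro Min_in) auto
  then obtain x i y j where xi: "(x, i) \<in> anchors s" and yj: "(y, j) \<in> anchors t"
    and len: "fssd_dist_bound \<delta> s t = i + 2 * \<delta> x y + j" by auto
  have "(adj (FSSD m G) ^^ i) s (Orig x)" "(adj (FSSD m G) ^^ j) (Orig y) t"
    using anchors_walk[OF s xi] anchors_walk[OF t yj] by simp_all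
  moreover have "(adj (FSSD m G) ^^ (2 * \<delta> x y)) (Orig x) (Orig y)"
    using anchors_walk(1)[OF s xi] anchors_walk(1)[OF t yj] by (intro FSSD_walk_double[OF m G] \<delta>)
  ultimately show ?thesis unfolding len by (blast intro: relpowp_trans[OF relpowp_trans])
qed

section \<open>Neighbourhood coronas\<close>

lemma verts_nbh_corona:
  "verts (nbh_corona G H) = Inl ` verts G \<union> {Inr (w, h) | w h. w \<in> verts G \<and> h \<in> verts H}"
  by (simp add: nbh_corona_def verts_def Let_def)

lemma Inl_in_verts_nbh_corona [simp]: "Inl v \<in> verts (nbh_corona G H) \<longleftrightarrow> v \<in> verts G"
  and Inr_in_verts_nbh_corona [simp]: "Inr (w, h) \<in> verts (nbh_corona G H) \<longleftrightarrow> w \<in> verts G \<and> h \<in> verts H"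
  by (auto simp: verts_nbh_corona)

lemma adj_nbh_corona:
  "adj (nbh_corona G H) x y \<longleftrightarrow> x \<in> verts (nbh_corona G H) \<and> y \<in> verts (nbh_corona G H) \<and>
     (case (x, y) of
        (Inl u, Inl v) \<Rightarrow> adj G u v
      | (Inr (w, h), Inr (w', h')) \<Rightarrow> w = w' \<and> adj H h h'
      | (Inr (w, h), Inl v) \<Rightarrow> adj G w v
      | (Inl v, Inr (w, h)) \<Rightarrow> adj G w v)"
  by (simp add: nbh_corona_def adj_def verts_def Let_def)

lemma adj_nbh_corona_simps [simp]:
  "adj (nbh_corona G H) (Inl u) (Inl v) \<longleftrightarrow> u \<in> verts G \<and> v \<in> verts G \<and> adj G u v"
  "adj (nbh_corona G H) (Inr (w, h)) (Inr (w', h')) \<longleftrightarrow>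
     w \<in> verts G \<and> h \<in> verts H \<and> h' \<in> verts H \<and> w = w' \<and> adj H h h'"
  "adj (nbh_corona G H) (Inr (w, h)) (Inl v) \<longleftrightarrow> w \<in> verts G \<and> h \<in> verts H \<and> v \<in> verts G \<and> adj G w v"
  "adj (nbh_corona G H) (Inl v) (Inr (w, h)) \<longleftrightarrow> w \<in> verts G \<and> h \<in> verts H \<and> v \<in> verts G \<and> adj G w v"
  by (auto simp: adj_nbh_corona)

lemma adj_nbh_corona_in_verts:
  "adj (nbh_corona G H) x y \<Longrightarrow> x \<in> verts (nbh_corona G H) \<and> y \<in> verts (nbh_corona G H)"
  by (simp add: adj_nbh_corona)

lemma inj_graph_hom_nbh_corona:
  assumes \<sigma>: "inj_graph_hom G G' \<sigma>" and \<tau>: "inj_graph_hom H H' \<tau>"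
  shows "inj_graph_hom (nbh_corona G H) (nbh_corona G' H') (map_sum \<sigma> (map_prod \<sigma> \<tau>))"
proof -
  have \<sigma>v: "\<And>x. x \<in> verts G \<Longrightarrow> \<sigma> x \<in> verts G'" and \<sigma>i: "inj_on \<sigma> (verts G)"
    and \<sigma>a: "\<And>x y. adj G x y \<Longrightarrow> adj G' (\<sigma> x) (\<sigma> y)"
    using \<sigma> by (auto simp: inj_graph_hom_def)
  have \<tau>v: "\<And>x. x \<in> verts H \<Longrightarrow> \<tau> x \<in> verts H'" and \<tau>i: "inj_on \<tau> (verts H)"
    and \<tau>a: "\<And>x y. adj H x y \<Longrightarrow> adj H' (\<tau> x) (\<tau> y)"
    using \<tau> by (auto simp: inj_graph_hom_def)
  let ?f = "map_sum \<sigma> (map_prod \<sigma> \<tau>)"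
  have "?f ` verts (nbh_corona G H) \<subseteq> verts (nbh_corona G' H')"
    using \<sigma>v \<tau>v by (auto simp: verts_nbh_corona)
  moreover have "inj_on ?f (verts (nbh_corona G H))"
  proof (rule inj_onI)
    fix x y assume "x \<in> verts (nbh_corona G H)" "y \<in> verts (nbh_corona G H)" "?f x = ?f y"
    with \<sigma>i \<tau>i show "x = y" by (auto simp: verts_nbh_corona inj_on_eq_iff)
  qed
  moreover have "adj (nbh_corona G' H') (?f x) (?f y)" if "adj (nbh_corona G H) x y" for x y
    using that \<sigma>v \<tau>v \<sigma>a \<tau>a
    by (cases x; cases y) auto
  ultimately show ?thesis by (simp add: inj_graph_hom_def)
qed

lemma verts_complete_graph [simp]: "verts (complete_graph n) = {1..n}"
  and adj_complete_graph [simp]: "adj (complete_graph n) i j \<longleftrightarrow> i \<in> {1..n} \<and> j \<in> {1..n} \<and> i \<noteq> j"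
  by (simp_all add: complete_graph_def verts_def adj_def)

lemma verts_path_graph [simp]: "verts (path_graph p) = {1..p}"
  and adj_path_graph [simp]:
    "adj (path_graph p) g h \<longleftrightarrow> g \<in> {1..p} \<and> h \<in> {1..p} \<and> (h = g + 1 \<or> g = h + 1)"
  by (simp_all add: path_graph_def verts_def adj_def)

lemma inj_graph_hom_complete_graph:
  assumes "inj_on \<sigma> {1..n}" "\<sigma> ` {1..n} \<subseteq> {1..n'}"
  shows "inj_graph_hom (complete_graph n) (complete_graph n') \<sigma>"
  using assms unfolding inj_graph_hom_def by (auto simp del: atLeastAtMost_iff dest: inj_onD)

lemma inj_graph_hom_path_graph_2:
  assumes "g \<in> {1..p}" "g' \<in> {1..p}" "g' = g + 1 \<or> g = g' + 1"
  shows "inj_graph_hom (path_graph 2) (path_graph p) (\<lambda>h. if h = 1 then g else g')"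
  using assms by (auto simp: inj_graph_hom_def inj_on_def)

abbreviation KP_corona :: "nat \<Rightarrow> nat \<Rightarrow> (nat + nat \<times> nat) graph" where
  "KP_corona n p \<equiv> nbh_corona (complete_graph n) (path_graph p)"

lemma KP_corona_embedding:
  assumes i: "i \<in> {1..n}" and g: "g \<in> {1..p}" and p: "p \<ge> 2"
  obtains f where "inj_graph_hom (KP_corona n 2) (KP_corona n p) f" "f (Inr (1, 1)) = Inr (i, g)"
proof -
  obtain g' where g': "g' \<in> {1..p}" "g' = g + 1 \<or> g = g' + 1"
  proof (cases "g < p")
    case True
    then show ?thesis using g by (intro that[of "g + 1"]) auto
  next
    case False
    then show ?thesis using g p by (intro that[of "g - 1"]) auto
  qed
  let ?\<sigma> = "Transposition.transpose 1 i" and ?\<tau> = "\<lambda>h::nat. if h = 1 then g else g'"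
  have "inj_graph_hom (complete_graph n) (complete_graph n) ?\<sigma>"
    using i by (intro inj_graph_hom_complete_graph) auto
  moreover have "inj_graph_hom (path_graph 2) (path_graph p) ?\<tau>"
    using g g' by (rule inj_graph_hom_path_graph_2)
  ultimately show ?thesis
    by (intro that[of "map_sum ?\<sigma> (map_prod ?\<sigma> ?\<tau>)"] inj_graph_hom_nbh_corona) simp_all
qed

text \<open>K_n \<star> P_2 has diameter 2 when n \<ge> 3.\<close>
fun KP2_dist_bound :: "nat + nat \<times> nat \<Rightarrow> nat + nat \<times> nat \<Rightarrow> nat" where
  "KP2_dist_bound (Inl i) (Inl j) = (if i = j then 0 else 1)"
| "KP2_dist_bound (Inl i) (Inr (j, _)) = (if i = j then 2 else 1)"
| "KP2_dist_bound (Inr (j, _)) (Inl i) = (if i = j then 2 else 1)"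
| "KP2_dist_bound (Inr (i, h)) (Inr (j, h')) = (if i = j then (if h = h' then 0 else 1) else 2)"

lemma third_index:
  fixes n i j :: nat
  assumes "n \<ge> 3"
  obtains k where "k \<in> {1..n}" "k \<noteq> i" "k \<noteq> j"
  using assms
  by (intro that[of "if i \<noteq> 1 \<and> j \<noteq> 1 then 1 else if i \<noteq> 2 \<and> j \<noteq> 2 then 2 else 3"]) auto

lemma KP2_walk_dist_bound:
  assumes n: "n \<ge> 3" and x: "x \<in> verts (KP_corona n 2)" and y: "y \<in> verts (KP_corona n 2)"
  shows "(adj (KP_corona n 2) ^^ KP2_dist_bound x y) x y"
proof -
  let ?G = "KP_corona n 2"
  have walk1: "(adj ?G ^^ 1) x y" if "adj ?G x y" using that by (simp only: relpowp_1)
  have walk2: "(adj ?G ^^ 2) x y" if "adj ?G x (Inl k)" "adj ?G (Inl k) y" for k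
    using that by (rule relpowp_2_I)
  consider (ll) i j where "x = Inl i" "y = Inl j" | (lr) i j h where "x = Inl i" "y = Inr (j, h)"
    | (rl) i j h where "x = Inr (j, h)" "y = Inl i" | (rr) i h j h' where "x = Inr (i, h)" "y = Inr (j, h')"
    by (cases x; cases y) auto
  then show ?thesis
  proof cases
    case (ll i j)
    then show ?thesis using x y walk1 by (cases "i = j") simp_all
  next
    case (lr i j h)
    obtain k where "k \<in> {1..n}" "k \<noteq> i" "k \<noteq> j" using n by (rule third_index)
    then show ?thesis using lr x y walk1 walk2[of k] by (cases "i = j") auto
  next
    case (rl i j h)
    obtain k where "k \<in> {1..n}" "k \<noteq> i" "k \<noteq> j" using n by (rule third_index)
    then show ?thesis using rl x y walk1 walk2[of k] by (cases "i = j") auto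
  next
    case (rr i h j h')
    obtain k where "k \<in> {1..n}" "k \<noteq> i" "k \<noteq> j" using n by (rule third_index)
    moreover have "h' = h + 1 \<or> h = h' + 1" if "h \<noteq> h'" using rr x y that by simp arith
    ultimately show ?thesis using rr x y walk1 walk2[of k] by (cases "i = j"; cases "h = h'") auto
  qed
qed

section \<open>Exhaustive search\<close>

text \<open>The row (P, ds) of a vertex holds
  its palette P and the walk-length bounds ds to the earlier vertices, whose colours are ks,
  most recent first.\<close>
fun colourable :: "(nat list \<times> nat list) list \<Rightarrow> nat list \<Rightarrow> bool" where
  "colourable [] ks = True"
| "colourable ((P, ds) # rows) ks =
     (\<exists>k \<in> set P. (\<forall>(d, l) \<in> set (zip ds ks). l = k \<longrightarrow> k < d) \<and> colourable rows (k # ks))"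

fun constraint_rows ::
  "('v \<Rightarrow> nat list) \<Rightarrow> ('v \<Rightarrow> 'v \<Rightarrow> nat) \<Rightarrow> 'v list \<Rightarrow> 'v list \<Rightarrow> (nat list \<times> nat list) list" where
  "constraint_rows C D prev [] = []"
| "constraint_rows C D prev (v # vs) = (C v, map (D v) prev) # constraint_rows C D (v # prev) vs"

lemma colourable_constraint_rows:
  assumes "distinct (us @ vs)" and "\<And>v. v \<in> set vs \<Longrightarrow> col v \<in> set (C v)"
    and "\<And>u v. u \<in> set us \<union> set vs \<Longrightarrow> v \<in> set vs \<Longrightarrow> u \<noteq> v \<Longrightarrow> col u = col v \<Longrightarrow> col v < D v u"
  shows "colourable (constraint_rows C D us vs) (map col us)"
  using assms
proof (induction vs arbitrary: us)
  case (Cons v vs)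
  have "colourable (constraint_rows C D (v # us) vs) (map col (v # us))"
    using Cons.prems by (intro Cons.IH) auto
  moreover have "\<forall>(d, l) \<in> set (zip (map (D v) us) (map col us)). l = col v \<longrightarrow> col v < d"
    using Cons.prems by (auto simp: zip_map_map zip_same_conv_map)
  ultimately show ?case using Cons.prems(2) by auto
qed simp

lemma packing_coloring_colourable:
  assumes pc: "packing_coloring H a c" and vs: "set vs \<subseteq> verts H" "distinct vs"
    and C: "\<And>v. v \<in> verts H \<Longrightarrow> c v \<in> set (C v)"
    and D: "\<And>u v. u \<in> verts H \<Longrightarrow> v \<in> verts H \<Longrightarrow> (adj H ^^ D v u) v u"
  shows "colourable (constraint_rows C D [] vs) []"
proof -
  have "c v < D v u" if "u \<in> set vs" "v \<in> set vs" "u \<noteq> v" "c u = c v" for u v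
    using packing_coloring_walk[OF pc, of v u "D v u"] that vs D by auto
  then show ?thesis using colourable_constraint_rows[of "[]" vs c C D] vs C by auto
qed

section \<open>Colour 1 in FSSD_m(K_n \<star> P_p)\<close>

lemma packing_coloring_Inl_ne_1:
  assumes n: "n \<ge> 3" and p: "p \<ge> 2" and m: "m \<ge> 1"
    and pc: "packing_coloring (FSSD m (KP_corona n p)) a c" and a: "a \<le> n + 3" and i: "i \<in> {1..n}"
  shows "c (Orig (Inl i)) \<noteq> 1"
proof
  let ?H = "FSSD m (KP_corona n p)"
  assume c1: "c (Orig (Inl i)) = 1"
  define J where "J = {1..n} - {i}"
  define Z :: "(nat + nat \<times> nat) set" where "Z = Inl ` J \<union> Inr ` (J \<times> {1, 2})"
  define N where "N = (\<lambda>z. Sub {Inl i, z} 1) ` Z"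
  have Z: "z \<in> verts (KP_corona n p) \<and> adj (KP_corona n p) (Inl i) z" if "z \<in> Z" for z
    using that i p by (auto simp: Z_def J_def)
  have "inj_on (\<lambda>z. Sub {Inl i, z} 1) Z"
    by (rule inj_onI) (auto simp: Z_def doubleton_eq_iff)
  then have "card N = card Z" by (simp add: N_def card_image)
  also have "\<dots> = card (Inl ` J :: (nat + nat \<times> nat) set) + card (Inr ` (J \<times> {1, 2::nat}) :: (nat + nat \<times> nat) set)"
    unfolding Z_def by (rule card_Un_disjoint) (auto simp: J_def)
  also have "\<dots> = 3 * (n - 1)"
    using i by (simp add: card_image card_cartesian_product J_def)
  finally have card_N: "card N = 3 * (n - 1)" .
  have N: "s \<in> verts ?H \<and> adj ?H (Orig (Inl i)) s \<and> adj ?H s (Orig (Inl i))" if "s \<in> N" for s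
  proof -
    obtain z where "z \<in> Z" "s = Sub {Inl i, z} 1" using \<open>s \<in> N\<close> by (auto simp: N_def)
    with Z i FSSD_Sub_neighbour[of "Inl i" "KP_corona n p" z m] m show ?thesis by simp
  qed
  have "inj_on c N" "c ` N \<subseteq> {2..a}"
    using packing_coloring_neighbours[OF pc _ c1, of N] N i by (auto simp: N_def)
  then have "card N \<le> card {2..a}" by (intro card_inj_on_le) simp_all
  with card_N a n show False by simp
qed

lemma packing_coloring_Inr_ne_1_large:
  assumes n: "n \<ge> 5" and pc: "packing_coloring (FSSD 1 (KP_corona n 2)) a c" and a: "a \<le> n + 3"
  shows "c (Orig (Inr (1, 1))) \<noteq> 1"
proof
  let ?H = "FSSD 1 (KP_corona n 2)" and ?v = "Inr (1, 1) :: nat + nat \<times> nat"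
  assume c1: "c (Orig ?v) = 1"
  define J where "J = {2..n}"
  define Z :: "(nat + nat \<times> nat) set" where "Z = insert (Inr (1, 2)) (Inl ` J)"
  define A where "A = (\<lambda>z. Sub {?v, z} 1) ` Z"
  define U :: "(nat + nat \<times> nat) fssd_vertex set" where "U = Orig ` Inl ` J"
  have v: "?v \<in> verts (KP_corona n 2)" using n by simp
  have A: "s \<in> verts ?H \<and> adj ?H (Orig ?v) s \<and> adj ?H s (Orig ?v)" if "s \<in> A" for s
  proof -
    obtain z where "z \<in> Z" "s = Sub {?v, z} 1" using \<open>s \<in> A\<close> by (auto simp: A_def)
    with v FSSD_Sub_neighbour[of ?v "KP_corona n 2" z 1] n show ?thesis by (auto simp: Z_def J_def)
  qed
  have inj_A: "inj_on c A" and col_A: "c ` A \<subseteq> {2..a}"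
    using packing_coloring_neighbours[OF pc _ c1, of A] A v by (auto simp: A_def)
  have U: "U \<subseteq> verts ?H" "\<forall>u\<in>U. c u \<noteq> 1"
    using packing_coloring_Inl_ne_1[OF _ _ _ pc a] n by (auto simp: U_def J_def)
  have "(adj ?H ^^ 2) u u'" if "u \<in> U" "u' \<in> U" "u \<noteq> u'" for u u'
  proof -
    obtain j j' where "u = Orig (Inl j)" "u' = Orig (Inl j')" "j \<in> J" "j' \<in> J"
      using \<open>u \<in> U\<close> \<open>u' \<in> U\<close> by (auto simp: U_def)
    with \<open>u \<noteq> u'\<close> show ?thesis by (auto intro: FSSD_walk_Orig_Orig simp: J_def)
  qed
  then have inj_U: "inj_on c U" and col_U: "c ` U \<subseteq> {2..a}"
    using packing_coloring_inj_on[OF pc U] by blast+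
  have shared: "c ` A \<inter> c ` U \<subseteq> {2}"
  proof
    fix k assume "k \<in> c ` A \<inter> c ` U"
    then obtain s j where s: "s \<in> A" "c s = k" and j: "j \<in> J" "c (Orig (Inl j)) = k"
      by (auto simp: U_def)
    have "(adj ?H ^^ 1) s (Orig ?v)" using A[OF s(1)] by (simp only: relpowp_1)
    moreover have "(adj ?H ^^ 2) (Orig ?v) (Orig (Inl j))"
      using j v by (intro FSSD_walk_Orig_Orig) (auto simp: J_def)
    ultimately have "(adj ?H ^^ (1 + 2)) s (Orig (Inl j))" by (rule relpowp_trans)
    moreover have "s \<noteq> Orig (Inl j)" using s(1) by (auto simp: A_def)
    moreover have "Orig (Inl j) \<in> verts ?H" using j by (simp add: J_def)
    ultimately have "c s < 1 + 2"
      using packing_coloring_walk[OF pc, of s "Orig (Inl j)"] A[OF s(1)] s j by simp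
    with col_A s show "k \<in> {2}" by fastforce
  qed
  have "inj_on (\<lambda>z. Sub {?v, z} 1) Z" by (rule inj_onI) (auto simp: Z_def doubleton_eq_iff)
  then have "card A = n" using n by (simp add: A_def Z_def J_def card_image inj_on_def image_iff)
  moreover have "card U = n - 1" by (simp add: U_def J_def card_image inj_on_def)
  moreover have "card A + card U \<le> card {2..a} + 1"
  proof (rule card_add_le_if_one_shared_colour[OF _ _ inj_A inj_U])
    show "finite A" "finite U" "finite {2..a}" by (simp_all add: A_def Z_def J_def U_def)
    show "c ` A \<union> c ` U \<subseteq> {2..a}" using col_A col_U by blast
    show "card (c ` A \<inter> c ` U) \<le> 1" using card_mono[OF _ shared] by simp
  qed
  ultimately show False using a n by simp
qed

definition palette :: "nat \<Rightarrow> (nat + nat \<times> nat) fssd_vertex \<Rightarrow> nat list" where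
  "palette a v =
     (if v = Orig (Inr (1, 1)) then [1] else case v of Orig (Inl _) \<Rightarrow> [2..<Suc a] | _ \<Rightarrow> [1..<Suc a])"

lemma palette_packing_coloring:
  assumes n: "n \<ge> 3" and pc: "packing_coloring (FSSD 1 (KP_corona n 2)) a c" and a: "a \<le> n + 3"
    and c1: "c (Orig (Inr (1, 1))) = 1" and v: "v \<in> verts (FSSD 1 (KP_corona n 2))"
  shows "c v \<in> set (palette (n + 3) v)"
proof -
  have "c v \<in> {1..n + 3}" using packing_coloring_range[OF pc v] a by auto
  moreover have "c v \<noteq> 1" if "v = Orig (Inl i)" for i
    using packing_coloring_Inl_ne_1[OF n _ _ pc a, of i] v that by simp
  ultimately show ?thesis using c1 by (auto simp: palette_def split: fssd_vertex.split sum.split)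
qed

text \<open>Lists of vertices of FSSD_1(K_n \<star> P_2), n = 3, 4, admitting no colouring from the palettes
  that respects the distance bounds; they were found by an exhaustive search.\<close>
definition critical_vertices :: "nat \<Rightarrow> (nat + nat \<times> nat) fssd_vertex list" where
  "critical_vertices n =
    (if n = 3 then
      [Orig (Inr (1, 1)), Sub {Inr (1, 1), Inr (1, 2)} 1, Sub {Inr (1, 1), Inl 3} 1,
       Sub {Inr (1, 1), Inl 2} 1, Orig (Inl 2), Orig (Inl 3), Orig (Inr (1, 2)), Sub {Inr (1, 2), Inl 3} 1,
       Orig (Inl 1), Sub {Inr (1, 2), Inl 2} 1, Sub {Inr (3, 2), Inl 2} 1, Orig (Inr (3, 2)),
       Sub {Inr (3, 1), Inl 2} 1, Orig (Inr (3, 1)), Sub {Inr (3, 1), Inr (3, 2)} 1, Orig (Inr (2, 2)),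
       Sub {Inr (2, 2), Inl 3} 1, Orig (Inr (2, 1)), Sub {Inr (2, 1), Inl 3} 1,
       Sub {Inr (2, 1), Inr (2, 2)} 1, Sub {Inr (3, 2), Inl 1} 1, Sub {Inr (2, 1), Inl 1} 1,
       Sub {Inr (2, 2), Inl 1} 1, Sub {Inr (3, 1), Inl 1} 1, Sub {Inl 2, Inl 3} 1, Sub {Inl 1, Inl 2} 1,
       Sub {Inl 1, Inl 3} 1]
     else
      [Orig (Inr (1, 1)), Sub {Inr (1, 1), Inl 4} 1, Sub {Inr (1, 1), Inl 2} 1, Sub {Inr (1, 1), Inl 3} 1,
       Sub {Inr (1, 1), Inr (1, 2)} 1, Orig (Inl 4), Orig (Inl 3), Orig (Inl 2), Orig (Inr (1, 2)),
       Sub {Inr (1, 2), Inl 2} 1, Sub {Inr (1, 2), Inl 4} 1, Sub {Inr (1, 2), Inl 3} 1])"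

lemma critical_vertices_in_verts:
  "n = 3 \<or> n = 4 \<Longrightarrow> set (critical_vertices n) \<subseteq> verts (FSSD 1 (KP_corona n 2))"
  by (auto simp: critical_vertices_def doubleton_in_edges_iff)

lemma distinct_critical_vertices: "n = 3 \<or> n = 4 \<Longrightarrow> distinct (critical_vertices n)"
  by (elim disjE; hypsubst; code_simp)

lemma critical_vertices_not_colourable:
  "n = 3 \<or> n = 4 \<Longrightarrow>
    \<not> colourable (constraint_rows (palette (n + 3)) (fssd_dist_bound KP2_dist_bound) [] (critical_vertices n)) []"
  by (elim disjE; hypsubst; code_simp)

lemma packing_coloring_Inr_ne_1_small:
  assumes n: "n = 3 \<or> n = 4" and pc: "packing_coloring (FSSD 1 (KP_corona n 2)) a c" and a: "a \<le> n + 3"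
  shows "c (Orig (Inr (1, 1))) \<noteq> 1"
proof
  assume c1: "c (Orig (Inr (1, 1))) = 1"
  have n3: "n \<ge> 3" using n by auto
  have "colourable (constraint_rows (palette (n + 3)) (fssd_dist_bound KP2_dist_bound) [] (critical_vertices n)) []"
  proof (rule packing_coloring_colourable[OF pc])
    show "set (critical_vertices n) \<subseteq> verts (FSSD 1 (KP_corona n 2))" "distinct (critical_vertices n)"
      using n by (rule critical_vertices_in_verts, rule distinct_critical_vertices)
    show "c v \<in> set (palette (n + 3) v)" if "v \<in> verts (FSSD 1 (KP_corona n 2))" for v
      using palette_packing_coloring[OF n3 pc a c1 that] .
    show "(adj (FSSD 1 (KP_corona n 2)) ^^ fssd_dist_bound KP2_dist_bound v u) v u"
      if "u \<in> verts (FSSD 1 (KP_corona n 2))" "v \<in> verts (FSSD 1 (KP_corona n 2))" for u v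
      using FSSD_walk_dist_bound[OF _ adj_nbh_corona_in_verts KP2_walk_dist_bound[OF n3] that(2,1)] by simp
  qed
  with critical_vertices_not_colourable[OF n] show False by contradiction
qed

lemma packing_coloring_Inr_ne_1:
  assumes "n \<ge> 3" "packing_coloring (FSSD 1 (KP_corona n 2)) a c" "a \<le> n + 3"
  shows "c (Orig (Inr (1, 1))) \<noteq> 1"
proof (cases "n \<ge> 5")
  case True
  then show ?thesis using assms(2,3) by (rule packing_coloring_Inr_ne_1_large)
next
  case False
  then have "n = 3 \<or> n = 4" using assms(1) by auto
  then show ?thesis using assms(2,3) by (rule packing_coloring_Inr_ne_1_small)
qed

theorem lemma1:
  fixes n p m a :: nat and c :: "(nat + (nat \<times> nat)) fssd_vertex \<Rightarrow> nat"
  assumes "n \<ge> 3" and "p \<ge> 2" and "m \<ge> 1"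
    and "packing_coloring (FSSD m (nbh_corona (complete_graph n) (path_graph p))) a c"
    and "a \<le> n + 3"
  shows "(\<forall>i\<in>{1..n}. c (Orig (Inl i)) \<noteq> 1) \<and>
         (\<forall>i\<in>{1..n}. \<forall>g\<in>{1..p}. c (Orig (Inr (i, g))) \<noteq> 1)"
proof (intro conjI ballI)
  fix i assume "i \<in> {1..n}"
  with assms show "c (Orig (Inl i)) \<noteq> 1" by (intro packing_coloring_Inl_ne_1)
next
  fix i g assume "i \<in> {1..n}" "g \<in> {1..p}"
  then obtain f where f: "inj_graph_hom (KP_corona n 2) (KP_corona n p) f" "f (Inr (1, 1)) = Inr (i, g)"
    using assms(2) by (rule KP_corona_embedding)
  have "packing_coloring (FSSD 1 (KP_corona n 2)) a (c \<circ> map_fssd f)"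
    using inj_graph_hom_FSSD[OF f(1) assms(3)] assms(4) by (rule packing_coloring_inj_graph_hom)
  with assms(1) have "(c \<circ> map_fssd f) (Orig (Inr (1, 1))) \<noteq> 1"
    using assms(5) by (rule packing_coloring_Inr_ne_1)
  with f(2) show "c (Orig (Inr (i, g))) \<noteq> 1" by simp
qed

end
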